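(* Let $0\le t\le r\le n/2$ be integers, and let $A_y$ be the $(r-t+1)\times(r-t+1)$ tridiagonal matrix with zero diagonal, superdiagonal entries $\beta_{t+1},\dots,\beta_r$ and subdiagonal entries $\gamma_t,\dots,\gamma_{r-1}$, where $\beta_i=n-i+1$ and $\gamma_i=\frac{(i-t+1)(n-t-i)}{n-i}$. Then $A_y$ has $r-t+1$ simple eigenvalues, and its set of eigenvalues is $\{2x-(n-2t) : x\in\mathcal{R}(n-2t,\,r-t+1)\}$.
   Context: The Krawtchouk polynomial on $\{0,1\}^m$ of degree $k$ is $K^{(m)}_k(x)=\sum_{\ell=0}^k(-1)^\ell\binom{x}{\ell}\binom{m-x}{k-\ell}$ (a polynomial in $x$); $\mathcal{R}(m,k)$ denotes its set of roots, which are real and distinct. *)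

theory Defs
  imports "Jordan_Normal_Form.Char_Poly"
begin

definition krawtchouk :: "nat \<Rightarrow> nat \<Rightarrow> real \<Rightarrow> real" where
  "krawtchouk m k x = (\<Sum>l\<le>k. (-1)^l * (x gchoose l) * ((real m - x) gchoose (k - l)))"

definition kraw_roots :: "nat \<Rightarrow> nat \<Rightarrow> real set" where
  "kraw_roots m k = {x. krawtchouk m k x = 0}"

definition beta_coef :: "nat \<Rightarrow> nat \<Rightarrow> real" where
  "beta_coef n i = real n - real i + 1"

definition gamma_coef :: "nat \<Rightarrow> nat \<Rightarrow> nat \<Rightarrow> real" where
  "gamma_coef n t i = (real i - real t + 1) * (real n - real t - real i) / (real n - real i)"

definition A_y :: "nat \<Rightarrow> nat \<Rightarrow> nat \<Rightarrow> real mat" where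
  "A_y n t r = mat (r - t + 1) (r - t + 1) (\<lambda>(i, j).
      if j = i + 1 then beta_coef n (t + 1 + i)
      else if i = j + 1 then gamma_coef n t (t + j)
      else 0)"

end

(* Let A be tridiagonal with zero diagonal, superdiagonal b_0, ..., b_(k-2) (all nonzero) and
   subdiagonal g_0, ..., g_(k-2). The first k - 1 rows of A v = e v determine v from v_0:
   (b_0 ... b_(j-1)) v_j = v_0 p_j(e), where p_0 = 1, p_1 = X, p_(j+2) = X p_(j+1) - b_j g_j p_j;
   the last row then reads p_k(e) = 0, so the eigenvalues of A are the roots of p_k.
   For A_y we have b_j g_j = (j+1)(m-j) with m = n - 2t, which is the three-term recurrence of
   the Krawtchouk polynomials (read off from their generating function (1-X)^x (1+X)^(m-x)), so
   p_j(m - 2x) = j! K_j(x), and as p_j is even or odd its roots are the 2x - m with x in R(m, j).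
   Since all (j+1)(m-j) with j < r - t are positive, the roots of consecutive p_j interlace,
   so p_k has k distinct real roots; a characteristic polynomial of degree k with k distinct
   roots has only simple roots. *)

theory Submission
  imports Defs "HOL-Computational_Algebra.Formal_Power_Series"
begin

section \<open>The Krawtchouk recurrence\<close>

definition binomial_series :: "'a::field_char_0 \<Rightarrow> 'a \<Rightarrow> 'a fps" where
  "binomial_series s a = Abs_fps (\<lambda>l. s ^ l * (a gchoose l))"

lemma binomial_series_ODE:
  "(1 + fps_const s * fps_X) * fps_deriv (binomial_series s a) = fps_const (s * a) * binomial_series s a"
proof (rule fps_ext)
  fix n
  have "fps_nth ((1 + fps_const s * fps_X) * fps_deriv (binomial_series s a)) n
      = s ^ Suc n * (of_nat (Suc n) * (a gchoose Suc n) + of_nat n * (a gchoose n))"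
    by (cases n) (simp_all add: binomial_series_def algebra_simps)
  also have "\<dots> = s ^ Suc n * (a * (a gchoose n))"
    using gbinomial_mult_1[of a n] by (simp add: algebra_simps)
  finally show "fps_nth ((1 + fps_const s * fps_X) * fps_deriv (binomial_series s a)) n
      = fps_nth (fps_const (s * a) * binomial_series s a) n"
    by (simp add: binomial_series_def)
qed

lemma fps_nth_Suc_Suc_if_ODE:
  fixes G :: "'a::field_char_0 fps"
  assumes "(1 - fps_X ^ 2) * fps_deriv G = (fps_const c - fps_const d * fps_X) * G"
  shows "of_nat (Suc (Suc j)) * fps_nth G (Suc (Suc j))
    = c * fps_nth G (Suc j) - (d - of_nat j) * fps_nth G j"
proof -
  have lhs: "fps_nth ((1 - fps_X ^ 2) * fps_deriv G) (Suc j)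
      = of_nat (Suc (Suc j)) * fps_nth G (Suc (Suc j)) - of_nat j * fps_nth G j"
    by (cases j) (simp_all add: power2_eq_square algebra_simps)
  have rhs: "fps_nth ((fps_const c - fps_const d * fps_X) * G) (Suc j)
      = c * fps_nth G (Suc j) - d * fps_nth G j"
    by (simp add: left_diff_distrib mult.assoc)
  have "of_nat (Suc (Suc j)) * fps_nth G (Suc (Suc j)) - of_nat j * fps_nth G j
      = c * fps_nth G (Suc j) - d * fps_nth G j"
    using lhs rhs assms by metis
  then show ?thesis
    by (simp add: algebra_simps)
qed

lemma krawtchouk_series:
  "fps_nth (binomial_series (-1) x * binomial_series 1 (real m - x)) k = krawtchouk m k x"
  by (simp add: fps_mult_nth krawtchouk_def binomial_series_def atLeast0AtMost)

lemma krawtchouk_Suc_Suc: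
  "real (Suc (Suc k)) * krawtchouk m (Suc (Suc k)) x
    = (real m - 2 * x) * krawtchouk m (Suc k) x - (real m - real k) * krawtchouk m k x"
proof -
  define F where "F = binomial_series (-1) x"
  define H where "H = binomial_series 1 (real m - x)"
  have F: "(1 - fps_X) * fps_deriv F = fps_const (- x) * F"
    using binomial_series_ODE[of "-1" x] by (simp add: F_def flip: fps_const_neg)
  have H: "(1 + fps_X) * fps_deriv H = fps_const (real m - x) * H"
    using binomial_series_ODE[of 1 "real m - x"] by (simp add: H_def)
  have "(1 - fps_X ^ 2) * fps_deriv (F * H)
      = (1 + fps_X) * ((1 - fps_X) * fps_deriv F) * H + (1 - fps_X) * F * ((1 + fps_X) * fps_deriv H)"
    by (simp add: power2_eq_square algebra_simps)
  also have "\<dots> = ((1 + fps_X) * fps_const (- x) + (1 - fps_X) * fps_const (real m - x)) * (F * H)"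
    unfolding F H by (simp add: algebra_simps)
  also have "(1 + fps_X) * fps_const (- x) + (1 - fps_X) * fps_const (real m - x)
      = fps_const (real m - 2 * x) - fps_const (real m) * fps_X"
    by (simp add: fps_eq_iff algebra_simps)
  finally show ?thesis
    using fps_nth_Suc_Suc_if_ODE[of "F * H" _ _ k] by (simp add: krawtchouk_series F_def H_def)
qed

section \<open>Polynomials defined by a symmetric three-term recurrence\<close>

fun three_term_poly :: "(nat \<Rightarrow> 'a::comm_ring_1) \<Rightarrow> nat \<Rightarrow> 'a poly" where
  "three_term_poly c 0 = 1"
| "three_term_poly c (Suc 0) = [:0, 1:]"
| "three_term_poly c (Suc (Suc j)) =
     pCons 0 (three_term_poly c (Suc j)) - Polynomial.smult (c j) (three_term_poly c j)"

lemma degree_three_term_poly: "degree (three_term_poly c j) = j"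
  and lead_coeff_three_term_poly: "lead_coeff (three_term_poly c j) = 1"
proof -
  have "degree (three_term_poly c j) = j \<and> lead_coeff (three_term_poly c j) = 1"
  proof (induction c j rule: three_term_poly.induct)
    case (3 c j)
    let ?P = "pCons 0 (three_term_poly c (Suc j))" and ?Q = "Polynomial.smult (c j) (three_term_poly c j)"
    have "degree ?P = Suc (Suc j)" and "degree ?Q < Suc (Suc j)"
      using 3 degree_smult_le[of "c j" "three_term_poly c j"] by auto
    then have "degree (?P - ?Q) = Suc (Suc j)"
      using degree_add_eq_left[of "- ?Q" ?P] by simp
    moreover have "coeff ?Q (Suc (Suc j)) = 0"
      using 3 by (simp add: coeff_eq_0)
    ultimately show ?case
      using 3 by auto
  qed simp_all
  then show "degree (three_term_poly c j) = j" "lead_coeff (three_term_poly c j) = 1"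
    by auto
qed

lemma three_term_poly_nonzero: "three_term_poly c j \<noteq> 0"
  using lead_coeff_three_term_poly[of c j] by auto

lemma poly_three_term_poly_minus:
  "poly (three_term_poly c j) (- y) = (-1) ^ j * poly (three_term_poly c j) y"
  by (induction c j rule: three_term_poly.induct) (simp_all add: algebra_simps)

lemma poly_three_term_poly_krawtchouk:
  "poly (three_term_poly (\<lambda>j. real (Suc j) * (real m - real j)) k) (real m - 2 * x)
    = fact k * krawtchouk m k x"
proof (induction "\<lambda>j. real (Suc j) * (real m - real j)" k rule: three_term_poly.induct)
  case (3 j)
  let ?K = "krawtchouk m"
  have "poly (three_term_poly (\<lambda>j. real (Suc j) * (real m - real j)) (Suc (Suc j))) (real m - 2 * x)
      = fact (Suc j) * ((real m - 2 * x) * ?K (Suc j) x - (real m - real j) * ?K j x)"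
    using 3 by (simp add: algebra_simps)
  also have "\<dots> = fact (Suc j) * (real (Suc (Suc j)) * ?K (Suc (Suc j)) x)"
    by (simp only: krawtchouk_Suc_Suc)
  also have "\<dots> = fact (Suc (Suc j)) * ?K (Suc (Suc j)) x"
    by (simp del: of_nat_Suc)
  finally show ?case .
qed (simp_all add: krawtchouk_def)

lemma roots_three_term_poly_krawtchouk:
  "{e. poly (three_term_poly (\<lambda>j. real (Suc j) * (real m - real j)) k) e = 0}
    = {2 * x - real m | x. x \<in> kraw_roots m k}"
proof -
  let ?p = "three_term_poly (\<lambda>j. real (Suc j) * (real m - real j)) k"
  have root_iff: "poly ?p (2 * x - real m) = 0 \<longleftrightarrow> krawtchouk m k x = 0" for x
  proof -
    have "poly ?p (2 * x - real m) = (-1) ^ k * poly ?p (real m - 2 * x)"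
      using poly_three_term_poly_minus[of _ k "real m - 2 * x"] by simp
    also have "\<dots> = (-1) ^ k * (fact k * krawtchouk m k x)"
      unfolding poly_three_term_poly_krawtchouk ..
    finally show ?thesis
      by simp
  qed
  show ?thesis
  proof (intro equalityI subsetI)
    fix e assume "e \<in> {e. poly ?p e = 0}"
    define x where "x = (e + real m) / 2"
    have e: "e = 2 * x - real m"
      unfolding x_def by (simp add: field_simps)
    then have "x \<in> kraw_roots m k"
      using root_iff[of x] \<open>e \<in> {e. poly ?p e = 0}\<close> by (simp add: kraw_roots_def)
    with e show "e \<in> {2 * x - real m | x. x \<in> kraw_roots m k}"
      by blast
  next
    fix e assume "e \<in> {2 * x - real m | x. x \<in> kraw_roots m k}"
    then obtain x where "e = 2 * x - real m" and "krawtchouk m k x = 0"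
      by (auto simp: kraw_roots_def)
    then show "e \<in> {e. poly ?p e = 0}"
      using root_iff[of x] by simp
  qed
qed

lemma prod_linear_dvd_if_roots:
  fixes p :: "'a::idom poly" and x :: "nat \<Rightarrow> 'a"
  assumes "inj_on x {..<k}" and "\<forall>l<k. poly p (x l) = 0"
  shows "(\<Prod>l<k. [:- x l, 1:]) dvd p"
  using assms
proof (induction k)
  case (Suc k)
  then obtain s where s: "p = (\<Prod>l<k. [:- x l, 1:]) * s"
    by (auto simp: inj_on_def)
  have "x k \<noteq> x l" if "l < k" for l
    using that by (intro inj_on_contraD[OF Suc.prems(1)]) auto
  then have "poly (\<Prod>l<k. [:- x l, 1:]) (x k) \<noteq> 0"
    by (auto simp: poly_prod)
  moreover have "poly p (x k) = 0"
    using Suc.prems(2) by simp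
  ultimately have "[:- x k, 1:] dvd s"
    using s by (simp add: poly_eq_0_iff_dvd[symmetric])
  then show ?case
    unfolding s prod.lessThan_Suc by (rule mult_dvd_mono[OF dvd_refl])
qed simp

lemma monic_eq_prod_linear_if_roots:
  fixes p :: "'a::idom poly" and x :: "nat \<Rightarrow> 'a"
  assumes "inj_on x {..<k}" and "\<forall>l<k. poly p (x l) = 0"
    and "degree p = k" and "lead_coeff p = 1"
  shows "p = (\<Prod>l<k. [:- x l, 1:])"
proof -
  let ?Q = "\<Prod>l<k. [:- x l, 1:]"
  obtain s where s: "p = ?Q * s"
    using prod_linear_dvd_if_roots[OF assms(1,2)] by (elim dvdE)
  have "?Q \<noteq> 0" and "s \<noteq> 0"
    using s assms(4) by auto
  moreover have "degree ?Q = k"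
    by (subst degree_prod_sum_eq) auto
  ultimately have "degree s = 0"
    using s assms(3) by (simp add: degree_mult_eq)
  moreover have "lead_coeff s = 1"
    using s assms(4) by (simp add: lead_coeff_mult lead_coeff_prod)
  ultimately have "s = 1"
    by (metis lead_coeff_pCons(2) pCons_one degree_eq_zeroE)
  then show ?thesis
    using s by simp
qed

lemma sign_poly_prod_linear:
  fixes x :: "nat \<Rightarrow> real"
  assumes mono: "strict_mono_on {..<k} x" and "i \<le> k"
    and "0 < i \<Longrightarrow> x (i - 1) < y" and "i < k \<Longrightarrow> y < x i"
  shows "0 < (-1) ^ (k - i) * poly (\<Prod>l<k. [:- x l, 1:]) y"
proof -
  have "{..<k} \<inter> - {l. l < i} = {i..<k}"
    by auto
  then have "(-1) ^ (k - i) = (\<Prod>l<k. if l < i then 1 else - 1 :: real)"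
    by (simp add: prod.If_cases)
  then have "(-1) ^ (k - i) * poly (\<Prod>l<k. [:- x l, 1:]) y
      = (\<Prod>l<k. (if l < i then 1 else -1) * (y - x l))"
    by (simp add: poly_prod prod.distrib)
  also have "\<dots> > 0"
  proof (rule prod_pos)
    fix l assume "l \<in> {..<k}"
    moreover have "x l \<le> x (i - 1)" if "l < i"
      using that assms(2) strict_mono_on_leD[OF mono] by simp
    moreover have "x i \<le> x l" if "i \<le> l" "l < k"
      using that strict_mono_on_leD[OF mono] by simp
    ultimately show "0 < (if l < i then 1 else -1) * (y - x l)"
      using assms(3,4) by fastforce
  qed
  finally show ?thesis .
qed

lemma poly_root_between_opposite_signs:
  fixes p :: "real poly"
  assumes "a < b" and "0 < (-1) ^ Suc j * poly p a" and "0 < (-1) ^ j * poly p b"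
  shows "\<exists>y. a < y \<and> y < b \<and> poly p y = 0"
proof -
  define e :: real where "e = (-1) ^ j"
  have "e * e = 1"
    by (simp add: e_def flip: power_add)
  have "0 < - e * poly p a" and "0 < e * poly p b"
    using assms(2,3) by (simp_all add: e_def)
  then have "0 < (- e * poly p a) * (e * poly p b)"
    by (rule mult_pos_pos)
  also have "\<dots> = - (e * e) * (poly p a * poly p b)"
    by (simp add: algebra_simps)
  finally have "poly p a * poly p b < 0"
    using \<open>e * e = 1\<close> by simp
  then show ?thesis
    using poly_IVT[OF \<open>a < b\<close>] by blast
qed

lemma roots_between_alternating_signs:
  fixes p :: "real poly" and z :: "nat \<Rightarrow> real"
  assumes incr: "\<forall>l<n. z l < z (Suc l)"
    and sign: "\<forall>l\<le>n. 0 < (-1) ^ (n - l) * poly p (z l)"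
  shows "\<exists>y. strict_mono_on {..<n} y \<and> (\<forall>l<n. z l < y l \<and> y l < z (Suc l) \<and> poly p (y l) = 0)"
proof -
  have "\<forall>l\<in>{..<n}. \<exists>y. z l < y \<and> y < z (Suc l) \<and> poly p y = 0"
  proof
    fix l assume "l \<in> {..<n}"
    then have "l < n" and "n - l = Suc (n - Suc l)"
      by auto
    moreover have "0 < (-1) ^ (n - l) * poly p (z l)"
      and "0 < (-1) ^ (n - Suc l) * poly p (z (Suc l))"
      using sign \<open>l < n\<close> by simp_all
    ultimately show "\<exists>y. z l < y \<and> y < z (Suc l) \<and> poly p y = 0"
      using incr by (intro poly_root_between_opposite_signs) auto
  qed
  then obtain y where y: "\<forall>l<n. z l < y l \<and> y l < z (Suc l) \<and> poly p (y l) = 0"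
    by (auto dest!: bchoice)
  have "y a < y b" if "a < b" "b < n" for a b
  proof -
    have "z (Suc a) \<le> z b"
    proof (rule lift_Suc_mono_le_ivl[of "{..<n}"])
      show "z m \<le> z (Suc m)" if "m \<in> {..<n}" for m
        using incr that by (simp add: less_imp_le)
    qed (use that in auto)
    moreover have "y a < z (Suc a)" and "z b < y b"
      using y that by auto
    ultimately show ?thesis
      by linarith
  qed
  then have "strict_mono_on {..<n} y"
    by (intro strict_mono_onI) auto
  with y show ?thesis
    by blast
qed

lemma roots_interlacing_alternating_signs:
  fixes p :: "real poly" and x :: "nat \<Rightarrow> real"
  assumes mono: "strict_mono_on {..<k} x" and "0 < k"
    and sign: "\<forall>l<k. 0 < (-1) ^ (k - l) * poly p (x l)"
    and a: "a < x 0" "0 < (-1) ^ Suc k * poly p a"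
    and b: "x (k - 1) < b" "0 < poly p b"
  shows "\<exists>y. strict_mono_on {..<Suc k} y \<and> (\<forall>l<Suc k. poly p (y l) = 0
    \<and> (0 < l \<longrightarrow> x (l - 1) < y l) \<and> (l < k \<longrightarrow> y l < x l))"
proof -
  define z where "z l = (if l = 0 then a else if l \<le> k then x (l - 1) else b)" for l
  have "\<exists>y. strict_mono_on {..<Suc k} y \<and> (\<forall>l<Suc k. z l < y l \<and> y l < z (Suc l) \<and> poly p (y l) = 0)"
  proof (rule roots_between_alternating_signs)
    show "\<forall>l<Suc k. z l < z (Suc l)"
    proof (intro allI impI)
      fix l assume "l < Suc k"
      then consider "l = 0" | "0 < l" "Suc l \<le> k" | "l = k"
        by linarith
      then show "z l < z (Suc l)"
      proof cases
        case 2
        then show ?thesis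
          using strict_mono_onD[OF mono, of "l - 1" l] by (simp add: z_def)
      qed (use a b \<open>0 < k\<close> in \<open>simp_all add: z_def\<close>)
    qed
    show "\<forall>l\<le>Suc k. 0 < (-1) ^ (Suc k - l) * poly p (z l)"
    proof (intro allI impI)
      fix l assume "l \<le> Suc k"
      then consider "l = 0" | "0 < l" "l \<le> k" | "l = Suc k"
        by linarith
      then show "0 < (-1) ^ (Suc k - l) * poly p (z l)"
      proof cases
        case 2
        then obtain j where "l = Suc j" and "j < k"
          by (cases l) auto
        then show ?thesis
          using sign by (simp add: z_def)
      qed (use a b in \<open>simp_all add: z_def\<close>)
    qed
  qed
  then obtain y where "strict_mono_on {..<Suc k} y"
    and "\<forall>l<Suc k. z l < y l \<and> y l < z (Suc l) \<and> poly p (y l) = 0"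
    by blast
  then show ?thesis
    by (intro exI[of _ y]) (auto simp: z_def)
qed

lemma three_term_poly_signs_at_large:
  fixes c :: "nat \<Rightarrow> real"
  shows "\<exists>N>B. 0 < poly (three_term_poly c k) N \<and> 0 < (-1) ^ k * poly (three_term_poly c k) (- N)"
proof -
  let ?P = "three_term_poly c k"
  obtain M where M: "\<forall>y\<ge>M. 1 \<le> poly ?P y"
    using poly_pinfty_gt_lc[of ?P] by (auto simp: lead_coeff_three_term_poly)
  define N where "N = max M (B + 1)"
  have "M \<le> N" and "B < N"
    unfolding N_def by auto
  then have "0 < poly ?P N"
    using M by fastforce
  moreover have "(-1) ^ k * poly ?P (- N) = poly ?P N"
    by (simp add: poly_three_term_poly_minus flip: power_add)
  ultimately show ?thesis
    using \<open>B < N\<close> by auto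
qed

lemma three_term_poly_interlacing:
  fixes c :: "nat \<Rightarrow> real"
  assumes "\<forall>j<i. 0 < c j"
  shows "\<exists>x. strict_mono_on {..<Suc i} x
    \<and> (\<forall>l<Suc i. poly (three_term_poly c (Suc i)) (x l) = 0)
    \<and> (\<forall>l<Suc i. 0 < (-1) ^ (i - l) * poly (three_term_poly c i) (x l))"
  using assms
proof (induction i)
  case 0
  show ?case
    by (rule exI[of _ "\<lambda>_. 0"]) (auto simp: strict_mono_on_def)
next
  case (Suc i)
  let ?p = "three_term_poly c"
  obtain x where mono: "strict_mono_on {..<Suc i} x"
    and roots: "\<forall>l<Suc i. poly (?p (Suc i)) (x l) = 0"
    and sign: "\<forall>l<Suc i. 0 < (-1) ^ (i - l) * poly (?p i) (x l)"
    using Suc by auto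
  define P where "P = ?p (Suc (Suc i))"
  have sign_P: "0 < (-1) ^ (Suc i - l) * poly P (x l)" if "l < Suc i" for l
  proof -
    \<comment> \<open>at a root of p_(i+1) the recurrence reduces to p_(i+2) = - c_i p_i\<close>
    have "(-1) ^ (Suc i - l) * poly P (x l) = c i * ((-1) ^ (i - l) * poly (?p i) (x l))"
      using roots that by (simp add: P_def Suc_diff_le algebra_simps)
    then show ?thesis
      using sign that Suc.prems by simp
  qed
  obtain N where "\<bar>x 0\<bar> + \<bar>x i\<bar> < N" and "0 < poly P N"
    and "0 < (-1) ^ Suc (Suc i) * poly P (- N)"
    unfolding P_def using three_term_poly_signs_at_large by blast
  then have "- N < x 0" and "x i < N"
    by linarith+
  have "\<exists>y. strict_mono_on {..<Suc (Suc i)} y \<and> (\<forall>l<Suc (Suc i). poly P (y l) = 0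
      \<and> (0 < l \<longrightarrow> x (l - 1) < y l) \<and> (l < Suc i \<longrightarrow> y l < x l))"
    by (rule roots_interlacing_alternating_signs[OF mono, where a = "- N" and b = N])
      (use sign_P \<open>- N < x 0\<close> \<open>x i < N\<close> \<open>0 < poly P N\<close>
        \<open>0 < (-1) ^ Suc (Suc i) * poly P (- N)\<close> in auto)
  then obtain y where y_mono: "strict_mono_on {..<Suc (Suc i)} y"
    and y: "\<forall>l<Suc (Suc i). poly P (y l) = 0
      \<and> (0 < l \<longrightarrow> x (l - 1) < y l) \<and> (l < Suc i \<longrightarrow> y l < x l)"
    by blast
  have factor: "?p (Suc i) = (\<Prod>l<Suc i. [:- x l, 1:])"
    by (rule monic_eq_prod_linear_if_roots[OF strict_mono_on_imp_inj_on[OF mono] roots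
          degree_three_term_poly lead_coeff_three_term_poly])
  have "0 < (-1) ^ (Suc i - l) * poly (?p (Suc i)) (y l)" if "l < Suc (Suc i)" for l
    unfolding factor using y that by (intro sign_poly_prod_linear[OF mono]) auto
  with y_mono y show ?case
    unfolding P_def by auto
qed

lemma card_roots_three_term_poly:
  fixes c :: "nat \<Rightarrow> real"
  assumes "\<forall>j<i. 0 < c j"
  shows "card {y. poly (three_term_poly c (Suc i)) y = 0} = Suc i"
proof -
  let ?R = "{y. poly (three_term_poly c (Suc i)) y = 0}"
  obtain x where mono: "strict_mono_on {..<Suc i} x"
    and roots: "\<forall>l<Suc i. poly (three_term_poly c (Suc i)) (x l) = 0"
    using three_term_poly_interlacing[OF assms] by blast
  have "x ` {..<Suc i} \<subseteq> ?R"
    using roots by auto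
  then have "card (x ` {..<Suc i}) \<le> card ?R"
    by (rule card_mono[OF poly_roots_finite[OF three_term_poly_nonzero]])
  then have "Suc i \<le> card ?R"
    using card_image[OF strict_mono_on_imp_inj_on[OF mono]] by simp
  moreover have "card ?R \<le> Suc i"
    using card_poly_roots_bound[OF three_term_poly_nonzero, of c "Suc i"]
    by (simp add: degree_three_term_poly)
  ultimately show ?thesis
    by simp
qed

lemma rsquarefree_if_card_roots_eq_degree:
  fixes p :: "'a::idom poly"
  assumes "p \<noteq> 0" and card: "card {x. poly p x = 0} = degree p"
  shows "rsquarefree p"
  unfolding rsquarefree_def
proof (intro conjI allI assms(1))
  fix a
  show "order a p = 0 \<or> order a p = 1"
  proof (rule ccontr)
    assume "\<not> (order a p = 0 \<or> order a p = 1)"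
    then have "[:- a, 1:] ^ 2 dvd p"
      by (simp add: order_divides)
    then obtain q where q: "p = [:- a, 1:] ^ 2 * q"
      by (elim dvdE)
    have "q \<noteq> 0"
      using q assms(1) by auto
    have "poly p a = 0"
      using q by simp
    have "degree p = degree q + 2"
      using q \<open>q \<noteq> 0\<close> by (simp add: degree_mult_eq degree_power_eq)
    have "{x. poly p x = 0} - {a} \<subseteq> {x. poly q x = 0}"
      using q by auto
    then have "card ({x. poly p x = 0} - {a}) \<le> card {x. poly q x = 0}"
      by (rule card_mono[OF poly_roots_finite[OF \<open>q \<noteq> 0\<close>]])
    also have "\<dots> \<le> degree q"
      by (rule card_poly_roots_bound[OF \<open>q \<noteq> 0\<close>])
    finally show False
      using card \<open>poly p a = 0\<close> \<open>degree p = degree q + 2\<close> by simp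
  qed
qed

lemma poly_three_term_poly_Suc:
  "poly (three_term_poly c (Suc j)) y
    = y * poly (three_term_poly c j) y - (if j = 0 then 0 else c (j - 1) * poly (three_term_poly c (j - 1)) y)"
  by (cases j) simp_all

section \<open>Tridiagonal matrices with zero diagonal\<close>

definition trid_mat :: "nat \<Rightarrow> (nat \<Rightarrow> 'a) \<Rightarrow> (nat \<Rightarrow> 'a) \<Rightarrow> 'a::zero mat" where
  "trid_mat k b g = mat k k (\<lambda>(i, j). if j = i + 1 then b i else if i = j + 1 then g j else 0)"

lemma trid_mat_carrier: "trid_mat k b g \<in> carrier_mat k k"
  by (simp add: trid_mat_def)

lemma trid_mat_mult_vec_nth:
  fixes b g :: "nat \<Rightarrow> 'a::comm_semiring_1"
  assumes "v \<in> carrier_vec k" and "j < k"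
  shows "(trid_mat k b g *\<^sub>v v) $ j
    = (if j = 0 then 0 else g (j - 1) * v $ (j - 1)) + (if Suc j < k then b j * v $ Suc j else 0)"
proof -
  have "(trid_mat k b g *\<^sub>v v) $ j
      = (\<Sum>i<k. (if i = Suc j then b j * v $ i else 0) + (if j = Suc i then g i * v $ i else 0))"
    using assms by (auto simp: trid_mat_def scalar_prod_def atLeast0LessThan intro!: sum.cong)
  also have "\<dots> = (if Suc j < k then b j * v $ Suc j else 0) + (if j = 0 then 0 else g (j - 1) * v $ (j - 1))"
    using assms(2) by (cases j) (simp_all add: sum.distrib)
  finally show ?thesis
    by (simp add: add.commute)
qed

definition three_term_vec :: "nat \<Rightarrow> (nat \<Rightarrow> 'a) \<Rightarrow> (nat \<Rightarrow> 'a) \<Rightarrow> 'a \<Rightarrow> 'a::field vec" where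
  "three_term_vec k b c e = vec k (\<lambda>j. poly (three_term_poly c j) e / (\<Prod>i<j. b i))"

lemma three_term_vec_nonzero:
  assumes "0 < k"
  shows "three_term_vec k b c e \<noteq> 0\<^sub>v k"
proof
  assume "three_term_vec k b c e = 0\<^sub>v k"
  then have "three_term_vec k b c e $ 0 = 0"
    using assms by simp
  then show False
    using assms by (simp add: three_term_vec_def)
qed

lemma trid_mat_mult_three_term_vec_nth:
  fixes b g c :: "nat \<Rightarrow> 'a::field"
  assumes b: "\<forall>j. Suc j < k \<longrightarrow> b j \<noteq> 0" and c: "\<forall>j. Suc j < k \<longrightarrow> b j * g j = c j"
    and "j < k"
  shows "(trid_mat k b g *\<^sub>v three_term_vec k b c e) $ j
    = e * three_term_vec k b c e $ j
      - (if Suc j = k then poly (three_term_poly c k) e / (\<Prod>i<j. b i) else 0)"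
proof -
  let ?p = "\<lambda>j. poly (three_term_poly c j) e" and ?B = "\<lambda>j. \<Prod>i<j. b i"
  have B: "?B j \<noteq> 0"
    using b \<open>j < k\<close> by auto
  let ?u = "three_term_vec k b c e"
  have u: "?u \<in> carrier_vec k"
    by (simp add: three_term_vec_def)
  have lower: "(if j = 0 then 0 else g (j - 1) * ?u $ (j - 1))
      = (if j = 0 then 0 else c (j - 1) * ?p (j - 1)) / ?B j"
  proof (cases j)
    case (Suc i)
    have "?B j = ?B i * b i" and "b i * g i = c i"
      using Suc \<open>j < k\<close> c by simp_all
    then show ?thesis
      using B Suc \<open>j < k\<close> by (simp add: three_term_vec_def field_simps)
  qed simp
  have upper: "(if Suc j < k then b j * ?u $ Suc j else 0)
      = (if Suc j < k then ?p (Suc j) / ?B j else 0)"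
    using b B by (simp add: three_term_vec_def field_simps)
  have "(trid_mat k b g *\<^sub>v ?u) $ j
      = ((if j = 0 then 0 else c (j - 1) * ?p (j - 1)) + ?p (Suc j)) / ?B j
        - (if Suc j = k then ?p (Suc j) / ?B j else 0)"
    unfolding trid_mat_mult_vec_nth[OF u \<open>j < k\<close>] lower upper
    using \<open>j < k\<close> by (auto simp: three_term_vec_def add_divide_distrib)
  also have "(if j = 0 then 0 else c (j - 1) * ?p (j - 1)) + ?p (Suc j) = e * ?p j"
    by (simp add: poly_three_term_poly_Suc)
  finally show ?thesis
    using \<open>j < k\<close> by (simp add: three_term_vec_def)
qed

lemma trid_mat_eigenvector_eq_smult:
  fixes b g c :: "nat \<Rightarrow> 'a::field"
  assumes b: "\<forall>j. Suc j < k \<longrightarrow> b j \<noteq> 0" and c: "\<forall>j. Suc j < k \<longrightarrow> b j * g j = c j"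
    and v: "v \<in> carrier_vec k" "trid_mat k b g *\<^sub>v v = e \<cdot>\<^sub>v v"
  shows "v = v $ 0 \<cdot>\<^sub>v three_term_vec k b c e"
proof -
  let ?A = "trid_mat k b g" and ?u = "three_term_vec k b c e"
  have u: "?u \<in> carrier_vec k"
    by (simp add: three_term_vec_def)
  have row: "b j * x $ Suc j = e * x $ j - (if j = 0 then 0 else g (j - 1) * x $ (j - 1))"
    if "x \<in> carrier_vec k" "(?A *\<^sub>v x) $ j = e * x $ j" "Suc j < k" for x j
    using that trid_mat_mult_vec_nth[OF that(1), of j b g] by (cases j) (simp_all add: eq_diff_eq)
  define a where "a = v $ 0"
  have "v $ j = a * ?u $ j" if "j < k" for j
    using that
  proof (induction j rule: less_induct)
    case (less j)
    show ?case
    proof (cases j)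
      case (Suc i)
      have "(?A *\<^sub>v v) $ i = e * v $ i" and "(?A *\<^sub>v ?u) $ i = e * ?u $ i"
        using v trid_mat_mult_three_term_vec_nth[OF b c, of i] less.prems Suc by simp_all
      then have row_v: "b i * v $ Suc i = e * v $ i - (if i = 0 then 0 else g (i - 1) * v $ (i - 1))"
        and row_u: "b i * ?u $ Suc i = e * ?u $ i - (if i = 0 then 0 else g (i - 1) * ?u $ (i - 1))"
        using row[OF v(1)] row[OF u] less.prems Suc by simp_all
      have "v $ i = a * ?u $ i" and "i \<noteq> 0 \<Longrightarrow> v $ (i - 1) = a * ?u $ (i - 1)"
        using less Suc by simp_all
      then have "b i * v $ Suc i = a * (e * ?u $ i - (if i = 0 then 0 else g (i - 1) * ?u $ (i - 1)))"
        unfolding row_v by (simp add: algebra_simps)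
      also have "\<dots> = b i * (a * ?u $ Suc i)"
        unfolding row_u[symmetric] by simp
      finally show ?thesis
        using b less.prems Suc by simp
    qed (use less.prems in \<open>simp add: a_def three_term_vec_def\<close>)
  qed
  then have "v = a \<cdot>\<^sub>v ?u"
    using v(1) u by (intro eq_vecI) auto
  then show ?thesis
    unfolding a_def .
qed

lemma eigenvalue_trid_mat_iff:
  fixes b g c :: "nat \<Rightarrow> 'a::field"
  assumes b: "\<forall>j. Suc j < k \<longrightarrow> b j \<noteq> 0" and c: "\<forall>j. Suc j < k \<longrightarrow> b j * g j = c j"
    and "0 < k"
  shows "eigenvalue (trid_mat k b g) e \<longleftrightarrow> poly (three_term_poly c k) e = 0"
proof -
  let ?A = "trid_mat k b g" and ?u = "three_term_vec k b c e" and ?B = "\<Prod>i<k - 1. b i"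
    and ?p = "poly (three_term_poly c k) e"
  have A: "?A \<in> carrier_mat k k" and u: "?u \<in> carrier_vec k"
    by (simp_all add: trid_mat_carrier three_term_vec_def)
  have Au: "(?A *\<^sub>v ?u) $ j = e * ?u $ j - (if Suc j = k then ?p / ?B else 0)" if "j < k" for j
    using trid_mat_mult_three_term_vec_nth[OF b c that] that by auto
  show ?thesis
  proof
    assume "eigenvalue ?A e"
    then obtain v where v: "v \<in> carrier_vec k" "v \<noteq> 0\<^sub>v k" "?A *\<^sub>v v = e \<cdot>\<^sub>v v"
      using A unfolding eigenvalue_def eigenvector_def by auto
    define a where "a = v $ 0"
    have v_u: "v = a \<cdot>\<^sub>v ?u"
      unfolding a_def by (rule trid_mat_eigenvector_eq_smult[OF b c v(1,3)])
    then have "a \<noteq> 0"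
      using v(2) u by auto
    have "a \<cdot>\<^sub>v (?A *\<^sub>v ?u) = e \<cdot>\<^sub>v (a \<cdot>\<^sub>v ?u)"
      using v(3) mult_mat_vec[OF A u, of a] v_u by simp
    then have "(a \<cdot>\<^sub>v (?A *\<^sub>v ?u)) $ (k - 1) = (e \<cdot>\<^sub>v (a \<cdot>\<^sub>v ?u)) $ (k - 1)"
      by (rule arg_cong)
    then have "a * (e * ?u $ (k - 1) - ?p / ?B) = e * (a * ?u $ (k - 1))"
      using Au[of "k - 1"] \<open>0 < k\<close> A u by simp
    then have "a * (?p / ?B) = 0"
      by (simp add: right_diff_distrib)
    moreover have "?B \<noteq> 0"
      using b by auto
    ultimately show "?p = 0"
      using \<open>a \<noteq> 0\<close> by simp
  next
    assume "?p = 0"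
    then have "?A *\<^sub>v ?u = e \<cdot>\<^sub>v ?u"
      using Au A u by (intro eq_vecI) auto
    then show "eigenvalue ?A e"
      using A u three_term_vec_nonzero[OF \<open>0 < k\<close>]
      unfolding eigenvalue_def eigenvector_def by auto
  qed
qed

section \<open>Eigenvalues of \<open>A_y\<close>\<close>

lemma order_char_poly_eq_1_if_card_eigenvalues:
  fixes A :: "'a::field mat"
  assumes A: "A \<in> carrier_mat k k" and card: "card {e. eigenvalue A e} = k"
    and "eigenvalue A e"
  shows "order e (char_poly A) = 1"
proof -
  have "degree (char_poly A) = k" and "coeff (char_poly A) k = 1"
    using degree_monic_char_poly[OF A] by simp_all
  then have "char_poly A \<noteq> 0"
    by auto
  have roots: "{e. poly (char_poly A) e = 0} = {e. eigenvalue A e}"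
    using eigenvalue_root_char_poly[OF A] by simp
  have "rsquarefree (char_poly A)"
    using \<open>char_poly A \<noteq> 0\<close> \<open>degree (char_poly A) = k\<close> card
    by (intro rsquarefree_if_card_roots_eq_degree) (simp_all add: roots)
  then show ?thesis
    using rsquarefree_root_order \<open>char_poly A \<noteq> 0\<close> roots \<open>eigenvalue A e\<close> by blast
qed

lemma beta_coef_mult_gamma_coef:
  assumes "t + j < n"
  shows "beta_coef n (Suc (t + j)) * gamma_coef n t (t + j) = real (Suc j) * (real n - 2 * real t - real j)"
  using assms by (simp add: beta_coef_def gamma_coef_def field_simps)

lemma eigenvalue_A_y_iff:
  assumes "t \<le> r" and "2 * r \<le> n"
  shows "eigenvalue (A_y n t r) e \<longleftrightarrow>
    poly (three_term_poly (\<lambda>j. real (Suc j) * (real (n - 2 * t) - real j)) (r - t + 1)) e = 0"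
proof -
  let ?k = "r - t + 1"
  have A: "A_y n t r = trid_mat ?k (\<lambda>j. beta_coef n (t + 1 + j)) (\<lambda>j. gamma_coef n t (t + j))"
    by (simp only: A_y_def trid_mat_def)
  have b: "\<forall>j. Suc j < ?k \<longrightarrow> beta_coef n (t + 1 + j) \<noteq> 0"
    using assms by (auto simp: beta_coef_def)
  have bg: "\<forall>j. Suc j < ?k \<longrightarrow> beta_coef n (t + 1 + j) * gamma_coef n t (t + j)
      = real (Suc j) * (real (n - 2 * t) - real j)"
    using assms by (auto simp: beta_coef_mult_gamma_coef of_nat_diff)
  show ?thesis
    unfolding A using eigenvalue_trid_mat_iff[OF b bg] by simp
qed

theorem lemma2p5:
  fixes n t r :: nat
  assumes "t \<le> r" and "2 * r \<le> n"
  shows "card {e. eigenvalue (A_y n t r) e} = r - t + 1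
    \<and> (\<forall>e. eigenvalue (A_y n t r) e \<longrightarrow> order e (char_poly (A_y n t r)) = 1)
    \<and> {e. eigenvalue (A_y n t r) e} =
        {2 * x - (real n - 2 * real t) | x. x \<in> kraw_roots (n - 2 * t) (r - t + 1)}"
proof -
  let ?A = "A_y n t r" and ?k = "r - t + 1" and ?m = "n - 2 * t"
  let ?p = "three_term_poly (\<lambda>j. real (Suc j) * (real ?m - real j)) ?k"
  have eigenvalues: "{e. eigenvalue ?A e} = {e. poly ?p e = 0}"
    using eigenvalue_A_y_iff[OF assms] by blast
  have "\<forall>j<r - t. 0 < real (Suc j) * (real ?m - real j)"
  proof (intro allI impI)
    fix j assume "j < r - t"
    then have "j < ?m"
      using assms by (simp add: less_diff_conv)
    then show "0 < real (Suc j) * (real ?m - real j)"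
      by simp
  qed
  then have card: "card {e. eigenvalue ?A e} = ?k"
    unfolding eigenvalues by (simp add: card_roots_three_term_poly)
  have "?A \<in> carrier_mat ?k ?k"
    by (simp add: A_y_def)
  then have simple: "\<forall>e. eigenvalue ?A e \<longrightarrow> order e (char_poly ?A) = 1"
    using order_char_poly_eq_1_if_card_eigenvalues card by blast
  have "real n - 2 * real t = real ?m"
    using assms by (simp add: of_nat_diff)
  then have "{e. eigenvalue ?A e} = {2 * x - (real n - 2 * real t) | x. x \<in> kraw_roots ?m ?k}"
    unfolding eigenvalues roots_three_term_poly_krawtchouk by (simp only:)
  with card simple show ?thesis
    by blast
qed

end
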